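(* Let $P$ be a finite lattice. The image of the characteristic map $\chi\colon \mathrm{Tr}(P)\to \mathrm{End}(P)$, $R\mapsto\chi^R$, is exactly the set $\mathrm{End}^\circ(P)$ of interior operators on $P$.
   Context: For a finite lattice $(P,\le)$, a transfer system on $P$ is a partial order $R$ on $P$ refining $\le$ (i.e. $x\,R\,y\Rightarrow x\le y$) that is closed under restriction: if $x\,R\,z$ and $y\le z$ then $(x\wedge y)\,R\,y$. $\mathrm{Tr}(P)$ is the set of transfer systems on $P$ ordered by inclusion of relations. For $R\in\mathrm{Tr}(P)$ and $x\in P$, the set $\{y\in P: y\,R\,x\}$ has a least element, and the characteristic function $\chi^R\colon P\to P$ sends $x$ to this least element. $\mathrm{End}(P)$ is the set of monotone maps $P\to P$ with the pointwise order. An interior operator is a monotone $f\colon P\to P$ with $f(x)\le x$ and $f(f(x))=f(x)$ for all $x$; $\mathrm{End}^\circ(P)\subseteq\mathrm{End}(P)$ is the set of interior operators. *)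

theory Defs
  imports Main
begin

definition transfer_system :: "('a::{finite,lattice}) rel \<Rightarrow> bool" where
  "transfer_system R \<longleftrightarrow>
     refl R \<and> antisym R \<and> trans R \<and>
     (\<forall>x y. (x, y) \<in> R \<longrightarrow> x \<le> y) \<and>
     (\<forall>x y z. (x, z) \<in> R \<and> y \<le> z \<longrightarrow> (inf x y, y) \<in> R)"

definition Tr :: "('a::{finite,lattice}) rel set" where
  "Tr = {R. transfer_system R}"

definition chi :: "('a::{finite,lattice}) rel \<Rightarrow> 'a \<Rightarrow> 'a" where
  "chi R x = (THE m. (m, x) \<in> R \<and> (\<forall>y. (y, x) \<in> R \<longrightarrow> m \<le> y))"

definition End_maps :: "(('a::{finite,lattice}) \<Rightarrow> 'a) set" where
  "End_maps = {f. mono f}"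

definition interior_operator :: "(('a::{finite,lattice}) \<Rightarrow> 'a) \<Rightarrow> bool" where
  "interior_operator f \<longleftrightarrow> mono f \<and> (\<forall>x. f x \<le> x) \<and> (\<forall>x. f (f x) = f x)"

definition End_interior :: "(('a::{finite,lattice}) \<Rightarrow> 'a) set" where
  "End_interior = {f. interior_operator f}"

end

theory Submission
  imports Defs
begin

text \<open>A transfer system \<open>R\<close> has \<open>\<chi>\<^sup>R x\<close> as the least element of \<open>{y. y R x}\<close>: a minimal
  element \<open>m\<close> is least, because restricting \<open>y R x\<close> along \<open>m \<le> x\<close> yields \<open>(y \<sqinter> m) R m\<close>,
  hence \<open>(y \<sqinter> m) R x\<close>. Closure under restriction then makes \<open>\<chi>\<^sup>R\<close> monotone, and
  \<open>\<chi>\<^sup>R x R x\<close> with transitivity makes it idempotent. Conversely an interior operator \<open>f\<close>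
  is \<open>\<chi>\<^sup>R\<close> for the transfer system \<open>x R y \<longleftrightarrow> f y \<le> x \<le> y\<close>.\<close>

lemma transfer_systemD:
  assumes "transfer_system R"
  shows transfer_system_refl: "(x, x) \<in> R"
    and transfer_system_trans: "(x, y) \<in> R \<Longrightarrow> (y, z) \<in> R \<Longrightarrow> (x, z) \<in> R"
    and transfer_system_le: "(x, y) \<in> R \<Longrightarrow> x \<le> y"
    and transfer_system_restrict: "(x, z) \<in> R \<Longrightarrow> y \<le> z \<Longrightarrow> (inf x y, y) \<in> R"
  using assms unfolding transfer_system_def
  by (auto dest: refl_onD transD) blast

lemma transfer_system_ex_least:
  assumes R: "transfer_system R"
  shows "\<exists>m. (m, x) \<in> R \<and> (\<forall>y. (y, x) \<in> R \<longrightarrow> m \<le> y)"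
proof -
  obtain m where m: "(m, x) \<in> R" and minimal: "\<And>b. (b, x) \<in> R \<Longrightarrow> b \<le> m \<Longrightarrow> m = b"
    using finite_has_minimal2[of "{y. (y, x) \<in> R}" x] transfer_system_refl[OF R, of x]
    by auto
  have "m \<le> y" if y: "(y, x) \<in> R" for y
  proof -
    have "(inf y m, m) \<in> R"
      using transfer_system_restrict[OF R y transfer_system_le[OF R m]] .
    then have "(inf y m, x) \<in> R" using transfer_system_trans[OF R _ m] by blast
    then have "m = inf y m" using minimal by simp
    then show ?thesis by (metis inf.cobounded1)
  qed
  with m show ?thesis by blast
qed

lemma chi_eqI:
  assumes "(m, x) \<in> R" and "\<And>y. (y, x) \<in> R \<Longrightarrow> m \<le> y"
  shows "chi R x = m"
  unfolding chi_def using assms by (blast intro: the_equality order_antisym)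

lemma
  assumes R: "transfer_system R"
  shows chi_rel: "(chi R x, x) \<in> R"
    and chi_least: "(y, x) \<in> R \<Longrightarrow> chi R x \<le> y"
  using transfer_system_ex_least[OF R, of x] chi_eqI[of _ x R] by metis+

lemma interior_operator_chi:
  assumes R: "transfer_system R"
  shows "interior_operator (chi R)"
  unfolding interior_operator_def
proof (intro conjI allI monoI)
  fix x y :: 'a
  assume "x \<le> y"
  have "(inf (chi R y) x, x) \<in> R"
    using transfer_system_restrict[OF R chi_rel[OF R] \<open>x \<le> y\<close>] .
  then have "chi R x \<le> inf (chi R y) x" by (rule chi_least[OF R])
  then show "chi R x \<le> chi R y" by simp
next
  show "chi R x \<le> x" for x
    using transfer_system_le[OF R chi_rel[OF R]] .
  show "chi R (chi R x) = chi R x" for x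
    by (rule chi_eqI) (use R transfer_system_refl transfer_system_trans chi_rel chi_least in blast)+
qed

definition interior_rel :: "('a::{finite,lattice} \<Rightarrow> 'a) \<Rightarrow> 'a rel" where
  "interior_rel f = {(x, y). x \<le> y \<and> f y \<le> x}"

lemma transfer_system_interior_rel:
  assumes f: "interior_operator f"
  shows "transfer_system (interior_rel f)"
proof -
  have mono: "mono f" and deflationary: "\<And>x. f x \<le> x" and idem: "\<And>x. f (f x) = f x"
    using f unfolding interior_operator_def by auto
  have trans: "(x, z) \<in> interior_rel f"
    if "(x, y) \<in> interior_rel f" "(y, z) \<in> interior_rel f" for x y z
  proof -
    from that have "x \<le> y" "f y \<le> x" "y \<le> z" "f z \<le> y" by (auto simp: interior_rel_def)
    have "f z = f (f z)" by (simp add: idem)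
    also have "\<dots> \<le> f y" using mono \<open>f z \<le> y\<close> by (rule monoD)
    finally show ?thesis
      using \<open>x \<le> y\<close> \<open>y \<le> z\<close> \<open>f y \<le> x\<close> by (auto simp: interior_rel_def)
  qed
  have restrict: "(inf x y, y) \<in> interior_rel f"
    if "(x, z) \<in> interior_rel f" "y \<le> z" for x y z
  proof -
    from that have "f z \<le> x" by (simp add: interior_rel_def)
    moreover have "f y \<le> f z" using mono \<open>y \<le> z\<close> by (rule monoD)
    ultimately show ?thesis using deflationary[of y] by (simp add: interior_rel_def)
  qed
  show ?thesis
    unfolding transfer_system_def
  proof (intro conjI allI impI)
    show "refl (interior_rel f)"
      by (rule refl_onI) (auto simp: interior_rel_def deflationary)
    show "antisym (interior_rel f)"
      by (rule antisymI) (auto simp: interior_rel_def)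
    show "trans (interior_rel f)" using trans by (blast intro: transI)
    show "x \<le> y" if "(x, y) \<in> interior_rel f" for x y
      using that by (simp add: interior_rel_def)
    show "(inf x y, y) \<in> interior_rel f" if "(x, z) \<in> interior_rel f \<and> y \<le> z" for x y z
      using restrict that by blast
  qed
qed

lemma chi_interior_rel:
  assumes "interior_operator f"
  shows "chi (interior_rel f) = f"
  using assms
  by (intro ext chi_eqI) (auto simp: interior_rel_def interior_operator_def)

theorem theorem2p7:
  shows "chi ` (Tr :: ('a::{finite,lattice}) rel set) = End_interior"
proof
  show "chi ` Tr \<subseteq> (End_interior :: ('a \<Rightarrow> 'a) set)"
    unfolding Tr_def End_interior_def using interior_operator_chi by blast
  show "End_interior \<subseteq> chi ` (Tr :: 'a rel set)"
  proof
    fix f :: "'a \<Rightarrow> 'a"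
    assume "f \<in> End_interior"
    then have f: "interior_operator f" unfolding End_interior_def by simp
    have "f = chi (interior_rel f)" using chi_interior_rel[OF f] by simp
    moreover have "interior_rel f \<in> Tr"
      unfolding Tr_def using transfer_system_interior_rel[OF f] by simp
    ultimately show "f \<in> chi ` Tr" by blast
  qed
qed

end
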